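(* Let $n\ge 3$, $q=\frac{2n}{n-2}$, $\kappa=\frac{n-1}{n}$, $p>1$. Identify $S^1$ with $[-\pi,\pi]$ with endpoints identified, and let $\lambda=-1$ on $(-\pi,0)$, $\lambda=1$ on $(0,\pi)$. Let $N$ be a smooth positive function on $S^1$, $\gamma_N=-\frac{\int_{S^1}\lambda N}{\int_{S^1}N}$, and $t\in\mathbb{R}$. For $d>0$ let $\hat\psi_d$ be the unique positive solution in $W^{2,\infty}(S^1)$ of $$-2\kappa q\,d^{-2q/n}\hat\psi_d''-\kappa(\gamma_N+\lambda)^2\hat\psi_d^{-q-1}+\kappa(t+\lambda)^2\hat\psi_d^{q-1}=0,$$ and let $\mathcal{F}_0(d)=\hat\psi_d(0)$. Let $\Psi_{N,t}=\left[\frac{1+\gamma_N^2}{1+t^2}\right]^{\frac{1}{2q}}$. If $|t|\neq1$, then $\hat\psi_d\to\Psi_{N,t}$ in $W^{2,p}(S^1)$ (and hence uniformly on $S^1$) as $d\to0^+$. In particular $\lim_{d\to0^+}\mathcal{F}_0(d)=\Psi_{N,t}$. *)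

theory Defs
  imports "HOL-Analysis.Analysis"
begin

text \<open>The circle S^1 is identified with [-pi,pi] with endpoints identified; functions on
S^1 are rendered as 2pi-periodic functions on the real line.\<close>

definition periodic_2pi :: "(real \<Rightarrow> real) \<Rightarrow> bool" where
  "periodic_2pi f \<longleftrightarrow> (\<forall>x. f (x + 2 * pi) = f x)"

text \<open>lambda = -1 on (-pi,0), 1 on (0,pi) (extended periodically; the value at 0, pi is irrelevant).\<close>
definition lam :: "real \<Rightarrow> real" where
  "lam x = sgn (sin x)"

definition smooth_on_circle :: "(real \<Rightarrow> real) \<Rightarrow> bool" where
  "smooth_on_circle f \<longleftrightarrow> periodic_2pi f \<and> (\<forall>k x. ((deriv ^^ k) f) differentiable (at x))"

definition gammaN :: "(real \<Rightarrow> real) \<Rightarrow> real" where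
  "gammaN N = - (integral {-pi..pi} (\<lambda>x. lam x * N x)) / integral {-pi..pi} N"

text \<open>W^{2,infinity}(S^1): periodic C^1 functions whose derivative is Lipschitz.\<close>
definition W2inf_circle :: "(real \<Rightarrow> real) \<Rightarrow> bool" where
  "W2inf_circle f \<longleftrightarrow> periodic_2pi f \<and> (\<forall>x. f differentiable (at x)) \<and>
     (\<exists>L. \<forall>x y. \<bar>deriv f x - deriv f y\<bar> \<le> L * \<bar>x - y\<bar>)"

definition is_pos_solution ::
  "real \<Rightarrow> real \<Rightarrow> real \<Rightarrow> real \<Rightarrow> real \<Rightarrow> real \<Rightarrow> (real \<Rightarrow> real) \<Rightarrow> bool" where
  "is_pos_solution n q \<kappa> \<gamma> t d \<psi> \<longleftrightarrow>
     W2inf_circle \<psi> \<and> (\<forall>x. \<psi> x > 0) \<and>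
     (AE x in lebesgue. \<exists>D. (deriv \<psi> has_real_derivative D) (at x) \<and>
        - 2 * \<kappa> * q * d powr (- 2 * q / n) * D
        - \<kappa> * (\<gamma> + lam x)^2 * \<psi> x powr (- q - 1)
        + \<kappa> * (t + lam x)^2 * \<psi> x powr (q - 1) = 0)"

text \<open>p-th power of the W^{2,p}(S^1) distance between f and the constant c
  (second derivative taken a.e., as the derivative of the Lipschitz function f').\<close>
definition W2p_dist_pow :: "real \<Rightarrow> (real \<Rightarrow> real) \<Rightarrow> real \<Rightarrow> ennreal" where
  "W2p_dist_pow p f c =
     (\<integral>\<^sup>+ x \<in> {-pi..pi}. ennreal (\<bar>f x - c\<bar> powr p + \<bar>deriv f x\<bar> powr p
                               + \<bar>deriv (deriv f) x\<bar> powr p) \<partial>lebesgue)"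

end

theory Submission
  imports Defs
begin

text \<open>Dividing by \<open>\<kappa>\<close>, the equation reads \<open>A \<psi>'' = F(x, \<psi>)\<close> with
  \<open>A = 2q d powr (-2q/n)\<close>, which tends to \<open>\<infinity>\<close> as \<open>d \<rightarrow> 0\<close>, and
  \<open>F(x, s) = (t + \<lambda>)^2 s powr (q - 1) - (\<gamma> + \<lambda>)^2 s powr (-q - 1)\<close>.
  Since \<open>|t| \<noteq> 1\<close> and \<open>|\<gamma>| < 1\<close>, \<open>F(x, s)\<close> is positive above and negative below two constants
  that do not depend on \<open>\<lambda>\<close>, so the maximum principle traps \<open>\<psi>\<close> between them for every \<open>d\<close>.
  Hence \<open>F(x, \<psi>)\<close> is bounded, and \<open>\<psi>''\<close>, \<open>\<psi>'\<close> and the oscillation of \<open>\<psi>\<close> are \<open>O(1/A)\<close>.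
  Integrating \<open>\<psi>''\<close> over a period gives \<open>\<integral> F(x, \<psi>) = 0\<close>; replacing \<open>\<psi>\<close> by \<open>c = \<psi>(0)\<close>
  costs \<open>O(1/A)\<close>, and \<open>\<lambda> = \<plusminus>1\<close> on the two half periods, so
  \<open>(1 + t^2) c powr (q - 1) - (1 + \<gamma>^2) c powr (-q - 1) = O(1/A)\<close>. This forces
  \<open>c^(2q) \<rightarrow> (1 + \<gamma>^2) / (1 + t^2)\<close>, and the bounds above upgrade the convergence of \<open>\<psi>(0)\<close>
  to uniform and \<open>W^{2,p}\<close> convergence of \<open>\<psi>\<close>.\<close>

section \<open>Lipschitz functions with almost-everywhere derivative bounds\<close>

lemma last_crossing:
  fixes h :: "real \<Rightarrow> real"
  assumes "a \<le> b" and cont: "continuous_on {a..b} h" and "h a < c" "c < h b"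
  obtains x where "x \<in> {a<..<b}" "h x = c" "\<And>y. x < y \<Longrightarrow> y \<le> b \<Longrightarrow> c < h y"
proof -
  define S where "S = {x \<in> {a..b}. h x = c}"
  have "\<exists>x\<ge>a. x \<le> b \<and> h x = c"
    using assms by (intro IVT') auto
  then have "S \<noteq> {}"
    by (auto simp: S_def)
  moreover have "closed S"
    unfolding S_def using continuous_closed_preimage_constant[OF cont] by simp
  moreover have "bdd_above S"
    unfolding S_def by (auto intro: bdd_aboveI[of _ b])
  ultimately have "Sup S \<in> S"
    using closed_contains_Sup by blast
  then have x: "a \<le> Sup S" "Sup S \<le> b" "h (Sup S) = c"
    by (auto simp: S_def)
  show ?thesis
  proof (rule that)
    show "Sup S \<in> {a<..<b}" "h (Sup S) = c"
      using x assms(3,4) by (auto simp: order.order_iff_strict)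
    fix y assume y: "Sup S < y" "y \<le> b"
    show "c < h y"
    proof (rule ccontr)
      assume "\<not> c < h y"
      moreover have "continuous_on {y..b} h"
        using continuous_on_subset[OF cont] x(1) y by auto
      ultimately have "\<exists>z\<ge>y. z \<le> b \<and> h z = c"
        using y assms(4) by (intro IVT') auto
      then obtain z where "z \<in> S" "Sup S < z"
        using x(1) y by (auto simp: S_def)
      then show False
        using cSup_upper[OF _ \<open>bdd_above S\<close>] by fastforce
    qed
  qed
qed

text \<open>At the last crossing of a level, \<open>h\<close> cannot have negative derivative.\<close>

lemma values_between_attained_in_exceptional_set:
  fixes h :: "real \<Rightarrow> real"
  assumes "a \<le> b" and cont: "continuous_on {a..b} h"
    and dec: "\<And>x. x \<in> {a<..<b} \<Longrightarrow> x \<notin> E \<Longrightarrow> \<exists>D<0. (h has_real_derivative D) (at x)"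
  shows "{h a<..<h b} \<subseteq> h ` (E \<inter> {a..b})"
proof
  fix c assume "c \<in> {h a<..<h b}"
  then have "h a < c" "c < h b"
    by auto
  then obtain x where x: "x \<in> {a<..<b}" "h x = c" "\<And>y. x < y \<Longrightarrow> y \<le> b \<Longrightarrow> c < h y"
    by (rule last_crossing[OF \<open>a \<le> b\<close> cont]) blast
  have "x \<in> E"
  proof (rule ccontr)
    assume "x \<notin> E"
    then obtain D where "D < 0" "(h has_real_derivative D) (at x)"
      using dec x(1) by blast
    then obtain d where "d > 0" and below: "\<And>k. k > 0 \<Longrightarrow> k < d \<Longrightarrow> h (x + k) < h x"
      using DERIV_neg_dec_right by blast
    define k where "k = min (d / 2) (b - x)"
    have "k > 0" "k < d" "x + k \<le> b"
      using x(1) \<open>d > 0\<close> by (auto simp: k_def)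
    then show False
      using below[of k] x(3)[of "x + k"] x(2) by simp
  qed
  then show "c \<in> h ` (E \<inter> {a..b})"
    using x by force
qed

text \<open>Lipschitz functions are differentiable only almost everywhere, so the mean value theorem
  is replaced by: the values crossed on the exceptional null set form a null set, being its
  image under a Lipschitz map.\<close>

lemma lipschitz_nonincreasing_of_AE_deriv_neg:
  fixes h :: "real \<Rightarrow> real"
  assumes "a \<le> b" and lip: "L-lipschitz_on {a..b} h"
    and deriv: "AE x in lebesgue. x \<in> {a<..<b} \<longrightarrow> (\<exists>D<0. (h has_real_derivative D) (at x))"
  shows "h b \<le> h a"
proof (rule ccontr)
  assume "\<not> ?thesis"
  obtain E where derE: "\<And>x. x \<in> space lebesgue - E \<Longrightarrow>
      x \<in> {a<..<b} \<longrightarrow> (\<exists>D<0. (h has_real_derivative D) (at x))"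
    and "E \<in> null_sets lebesgue"
    using AE_E3[OF deriv] by blast
  then have E: "negligible E"
    by (simp add: negligible_iff_null_sets)
  have "{h a<..<h b} \<subseteq> h ` (E \<inter> {a..b})"
    using derE by (intro values_between_attained_in_exceptional_set[OF \<open>a \<le> b\<close> lipschitz_on_continuous_on[OF lip]]) auto
  moreover have "negligible (h ` (E \<inter> {a..b}))"
  proof (rule negligible_locally_Lipschitz_image)
    show "negligible (E \<inter> {a..b})"
      using E negligible_Int by blast
    fix x assume "x \<in> E \<inter> {a..b}"
    then show "\<exists>T B. open T \<and> x \<in> T \<and> (\<forall>y\<in>E \<inter> {a..b} \<inter> T. norm (h y - h x) \<le> B * norm (y - x))"
      using lipschitz_on_normD[OF lip] by (intro exI[of _ UNIV] exI[of _ L]) auto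
  qed simp
  ultimately have "negligible {h a<..<h b}"
    by (rule negligible_subset[rotated])
  then show False
    using \<open>\<not> h b \<le> h a\<close> negligible_interval(2)[of "h a" "h b"] by simp
qed

lemma lipschitz_increment_le_of_AE_deriv_le:
  fixes g :: "real \<Rightarrow> real"
  assumes "a \<le> b" and lip: "L-lipschitz_on {a..b} g"
    and deriv: "AE x in lebesgue. x \<in> {a<..<b} \<longrightarrow> (\<exists>D. (g has_real_derivative D) (at x) \<and> D \<le> \<beta>)"
  shows "g b - g a \<le> \<beta> * (b - a)"
proof -
  have slack: "g b - g a \<le> (\<beta> + e) * (b - a)" if "e > 0" for e
  proof -
    define h where "h x = g x - (\<beta> + e) * x" for x
    have "(L + \<bar>\<beta> + e\<bar> * 1)-lipschitz_on {a..b} h"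
      unfolding h_def by (rule lipschitz_on_diff[OF lip lipschitz_on_cmult_real[OF lipschitz_on_id]])
    moreover have "AE x in lebesgue. x \<in> {a<..<b} \<longrightarrow> (\<exists>D<0. (h has_real_derivative D) (at x))"
      using deriv
    proof eventually_elim
      case (elim x)
      show ?case
        unfolding h_def using elim \<open>e > 0\<close>
        by (force intro!: derivative_eq_intros)
    qed
    ultimately have "h b \<le> h a"
      using \<open>a \<le> b\<close> by (rule lipschitz_nonincreasing_of_AE_deriv_neg[rotated])
    then show ?thesis
      by (simp add: h_def algebra_simps)
  qed
  show ?thesis
  proof (cases "a = b")
    case False
    then have "b - a > 0"
      using \<open>a \<le> b\<close> by simp
    show ?thesis
    proof (rule field_le_epsilon)
      fix e :: real assume "e > 0"
      have "g b - g a \<le> (\<beta> + e / (b - a)) * (b - a)"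
        using slack \<open>e > 0\<close> \<open>b - a > 0\<close> by simp
      also have "\<dots> = \<beta> * (b - a) + e"
        using \<open>b - a > 0\<close> by (simp add: distrib_right)
      finally show "g b - g a \<le> \<beta> * (b - a) + e" .
    qed
  qed simp
qed

lemma lipschitz_increment_ge_of_AE_deriv_ge:
  fixes g :: "real \<Rightarrow> real"
  assumes "a \<le> b" and lip: "L-lipschitz_on {a..b} g"
    and deriv: "AE x in lebesgue. x \<in> {a<..<b} \<longrightarrow> (\<exists>D. (g has_real_derivative D) (at x) \<and> \<beta> \<le> D)"
  shows "\<beta> * (b - a) \<le> g b - g a"
proof -
  have "(- g b) - (- g a) \<le> (- \<beta>) * (b - a)"
  proof (rule lipschitz_increment_le_of_AE_deriv_le[OF \<open>a \<le> b\<close>])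
    show "L-lipschitz_on {a..b} (\<lambda>x. - g x)"
      using lip by simp
    show "AE x in lebesgue. x \<in> {a<..<b} \<longrightarrow>
        (\<exists>D. ((\<lambda>x. - g x) has_real_derivative D) (at x) \<and> D \<le> - \<beta>)"
      using deriv by eventually_elim (auto intro!: derivative_eq_intros)
  qed
  then show ?thesis
    by simp
qed

lemma lipschitz_increment_near_of_AE_deriv_near:
  fixes g :: "real \<Rightarrow> real"
  assumes "a \<le> b" and lip: "L-lipschitz_on {a..b} g"
    and deriv: "AE x in lebesgue. x \<in> {a<..<b} \<longrightarrow>
                  (\<exists>D. (g has_real_derivative D) (at x) \<and> \<bar>D - \<beta>\<bar> \<le> e)"
  shows "\<bar>g b - g a - \<beta> * (b - a)\<bar> \<le> e * (b - a)"
proof -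
  have "g b - g a \<le> (\<beta> + e) * (b - a)"
    using deriv by (intro lipschitz_increment_le_of_AE_deriv_le[OF \<open>a \<le> b\<close> lip])
      (auto elim!: eventually_mono simp: abs_le_iff)
  moreover have "(\<beta> - e) * (b - a) \<le> g b - g a"
    using deriv by (intro lipschitz_increment_ge_of_AE_deriv_ge[OF \<open>a \<le> b\<close> lip])
      (auto elim!: eventually_mono simp: abs_le_iff)
  ultimately show ?thesis
    by (simp add: abs_le_iff algebra_simps)
qed

lemma isCont_gt_nearby:
  fixes f :: "real \<Rightarrow> real"
  assumes "isCont f x0" "l < f x0"
  obtains \<delta> where "\<delta> > 0" "\<And>y. \<bar>y - x0\<bar> < \<delta> \<Longrightarrow> l < f y"
proof -
  have "\<forall>\<^sub>F y in at x0. l < f y"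
    using order_tendstoD(1)[OF assms(1)[unfolded isCont_def] assms(2)] .
  then obtain \<delta> where "\<delta> > 0" "\<And>y. y \<noteq> x0 \<Longrightarrow> dist y x0 < \<delta> \<Longrightarrow> l < f y"
    unfolding eventually_at by auto
  then show ?thesis
    using that assms(2) by (metis dist_real_def)
qed

lemma not_local_max_of_AE_second_deriv_pos:
  fixes f f' :: "real \<Rightarrow> real"
  assumes deriv: "\<And>x. (f has_real_derivative f' x) (at x)"
    and lip: "L-lipschitz_on {x0..x0 + \<delta>} f'"
    and "\<delta> > 0" "\<eta> > 0"
    and max: "\<And>y. \<bar>y - x0\<bar> < \<delta> \<Longrightarrow> f y \<le> f x0"
    and convex: "AE z in lebesgue. z \<in> {x0<..<x0 + \<delta>} \<longrightarrow>
                   (\<exists>D. (f' has_real_derivative D) (at z) \<and> \<eta> \<le> D)"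
  shows False
proof -
  have "f' x0 = 0"
    using DERIV_local_max[OF deriv \<open>\<delta> > 0\<close>] max by (simp add: abs_minus_commute)
  have f'_pos: "f' z > 0" if "x0 < z" "z < x0 + \<delta>" for z
  proof -
    have "\<eta> * (z - x0) \<le> f' z - f' x0"
    proof (rule lipschitz_increment_ge_of_AE_deriv_ge)
      show "L-lipschitz_on {x0..z} f'"
        using that by (intro lipschitz_on_subset[OF lip]) auto
      show "AE y in lebesgue. y \<in> {x0<..<z} \<longrightarrow> (\<exists>D. (f' has_real_derivative D) (at y) \<and> \<eta> \<le> D)"
        using convex by eventually_elim (use that in auto)
    qed (use that in auto)
    moreover have "\<eta> * (z - x0) > 0"
      using \<open>\<eta> > 0\<close> that by simp
    ultimately show ?thesis
      using \<open>f' x0 = 0\<close> by simp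
  qed
  define y where "y = x0 + \<delta> / 2"
  have "continuous_on {x0..y} f"
    using deriv by (intro continuous_at_imp_continuous_on) (meson DERIV_isCont)
  then obtain l z where z: "x0 < z" "z < y" "(f has_real_derivative l) (at z)" "f y - f x0 = (y - x0) * l"
    using MVT[of x0 y f] \<open>\<delta> > 0\<close> deriv by (auto simp: y_def real_differentiable_def)
  have "l = f' z"
    using DERIV_unique[OF z(3) deriv] .
  then have "l > 0"
    using f'_pos[of z] z(1,2) by (simp add: y_def)
  moreover have "y - x0 > 0"
    using \<open>\<delta> > 0\<close> by (simp add: y_def)
  ultimately have "f y - f x0 > 0"
    unfolding z(4) by (rule mult_pos_pos[rotated])
  moreover have "f y \<le> f x0"
    using max \<open>\<delta> > 0\<close> by (simp add: y_def)
  ultimately show False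
    by simp
qed

lemma not_local_min_of_AE_second_deriv_neg:
  fixes f f' :: "real \<Rightarrow> real"
  assumes deriv: "\<And>x. (f has_real_derivative f' x) (at x)"
    and lip: "L-lipschitz_on {x0..x0 + \<delta>} f'"
    and "\<delta> > 0" "\<eta> > 0"
    and min: "\<And>y. \<bar>y - x0\<bar> < \<delta> \<Longrightarrow> f x0 \<le> f y"
    and concave: "AE z in lebesgue. z \<in> {x0<..<x0 + \<delta>} \<longrightarrow>
                    (\<exists>D. (f' has_real_derivative D) (at z) \<and> D \<le> - \<eta>)"
  shows False
proof (rule not_local_max_of_AE_second_deriv_pos[of "\<lambda>x. - f x" "\<lambda>x. - f' x" L x0 \<delta> \<eta>])
  show "((\<lambda>x. - f x) has_real_derivative - f' x) (at x)" for x
    by (rule DERIV_minus[OF deriv])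
  show "AE z in lebesgue. z \<in> {x0<..<x0 + \<delta>} \<longrightarrow>
      (\<exists>D. ((\<lambda>x. - f' x) has_real_derivative D) (at z) \<and> \<eta> \<le> D)"
    using concave by eventually_elim (force intro: DERIV_minus)
qed (use assms in auto)

lemma periodic_2pi_int:
  assumes "periodic_2pi f"
  shows "f (x + of_int k * (2 * pi)) = f x"
proof -
  have per: "f (u + 2 * pi) = f u" for u
    using assms by (simp add: periodic_2pi_def)
  show ?thesis
  proof (induction k rule: int_induct[where k = 0])
    case (step1 i)
    have "f (x + of_int (i + 1) * (2 * pi)) = f ((x + of_int i * (2 * pi)) + 2 * pi)"
      by (simp add: algebra_simps)
    then show ?case
      using per step1 by simp
  next
    case (step2 i)
    have "f (x + of_int i * (2 * pi)) = f ((x + of_int (i - 1) * (2 * pi)) + 2 * pi)"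
      by (simp add: algebra_simps)
    then show ?case
      using per step2 by simp
  qed simp
qed

lemma periodic_2pi_reduce:
  assumes "periodic_2pi f"
  obtains y where "\<bar>y - c\<bar> \<le> pi" "f y = f x"
proof
  define k where "k = \<lfloor>(x - c + pi) / (2 * pi)\<rfloor>"
  have "of_int k \<le> (x - c + pi) / (2 * pi)" "(x - c + pi) / (2 * pi) < of_int k + 1"
    unfolding k_def by linarith+
  then have "of_int k * (2 * pi) \<le> x - c + pi" "x - c + pi < (of_int k + 1) * (2 * pi)"
    by (simp_all add: field_simps)
  then show "\<bar>x + of_int (- k) * (2 * pi) - c\<bar> \<le> pi"
    by (simp add: algebra_simps)
  show "f (x + of_int (- k) * (2 * pi)) = f x"
    using periodic_2pi_int[OF assms] .
qed

lemma periodic_2pi_deriv: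
  assumes "periodic_2pi f" and "\<And>x. f differentiable (at x)"
  shows "periodic_2pi (deriv f)"
  unfolding periodic_2pi_def
proof
  fix x
  have "((\<lambda>y. f (y + 2 * pi)) has_real_derivative deriv f (x + 2 * pi)) (at x)"
    using assms(2) DERIV_deriv_iff_real_differentiable DERIV_shift by blast
  moreover have "(\<lambda>y. f (y + 2 * pi)) = f"
    using assms(1) by (auto simp: periodic_2pi_def)
  ultimately show "deriv f (x + 2 * pi) = deriv f x"
    using DERIV_imp_deriv by fastforce
qed

lemma periodic_2pi_attains_max:
  assumes "periodic_2pi f" "continuous_on UNIV f"
  obtains x0 where "\<And>y. f y \<le> f x0"
proof -
  obtain x0 where x0: "\<And>y. y \<in> {-pi..pi} \<Longrightarrow> f y \<le> f x0"
    using continuous_attains_sup[of "{-pi..pi}" f] continuous_on_subset[OF assms(2)] by force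
  have "f y \<le> f x0" for y
  proof -
    obtain y' where "\<bar>y' - 0\<bar> \<le> pi" "f y' = f y"
      by (rule periodic_2pi_reduce[OF assms(1)])
    then show ?thesis
      using x0[of y'] by (simp add: abs_le_iff)
  qed
  then show ?thesis
    using that by blast
qed

lemma periodic_2pi_attains_min:
  assumes "periodic_2pi f" "continuous_on UNIV f"
  obtains x0 where "\<And>y. f x0 \<le> f y"
proof -
  have "periodic_2pi (\<lambda>x. - f x)" "continuous_on UNIV (\<lambda>x. - f x)"
    using assms by (auto simp: periodic_2pi_def intro: continuous_intros)
  then show ?thesis
    using periodic_2pi_attains_max that by (metis neg_le_iff_le)
qed

lemma AE_sin_nonzero: "AE x in lebesgue. sin (x :: real) \<noteq> 0"
proof -
  have "{x::real. sin x = 0} = range (\<lambda>i::int. of_int i * pi)"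
    by (auto simp: sin_zero_iff_int2)
  then have "countable {x::real. sin x = 0}"
    by simp
  then have "{x::real. sin x = 0} \<in> null_sets lebesgue"
    by (simp add: countable_imp_null_set_lborel null_sets_completionI)
  from AE_not_in[OF this] show ?thesis
    by simp
qed

lemma lam_eq_one: "x \<in> {0<..<pi} \<Longrightarrow> lam x = 1"
  by (auto simp: lam_def sin_gt_zero)

lemma lam_eq_minus_one: "x \<in> {-pi<..<0} \<Longrightarrow> lam x = -1"
  using sin_gt_zero[of "- x"] by (auto simp: lam_def)

lemma integral_pos_of_continuous_pos:
  fixes f :: "real \<Rightarrow> real"
  assumes "continuous_on {a..b} f" "\<And>x. x \<in> {a..b} \<Longrightarrow> f x > 0" "a < b"
  shows "integral {a..b} f > 0"
proof -
  obtain x where x: "x \<in> {a..b}" "\<And>y. y \<in> {a..b} \<Longrightarrow> f x \<le> f y"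
    using continuous_attains_inf[of "{a..b}" f] assms by auto
  have "(b - a) * f x = integral {a..b} (\<lambda>_. f x)"
    using \<open>a < b\<close> by simp
  also have "\<dots> \<le> integral {a..b} f"
    by (rule integral_le) (auto intro: integrable_continuous_interval assms x)
  finally have "(b - a) * f x \<le> integral {a..b} f" .
  moreover have "(b - a) * f x > 0"
    using assms(2)[OF x(1)] \<open>a < b\<close> by simp
  ultimately show ?thesis
    by linarith
qed

lemma abs_gammaN_less_one:
  assumes "smooth_on_circle N" and "\<And>x. N x > 0"
  shows "\<bar>gammaN N\<bar> < 1"
proof -
  have "N differentiable (at x)" for x
    using assms(1) unfolding smooth_on_circle_def by (metis funpow_0)
  then have cont: "continuous_on S N" for S
    by (meson continuous_at_imp_continuous_on differentiable_imp_continuous_within)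
  then have int: "N integrable_on {a..b}" for a b
    by (rule integrable_continuous_interval)
  define I1 where "I1 = integral {-pi..0} N"
  define I2 where "I2 = integral {0..pi} N"
  have "I1 > 0" "I2 > 0"
    unfolding I1_def I2_def using assms(2) by (auto intro!: integral_pos_of_continuous_pos cont)
  have "integral {-pi..pi} N = I1 + I2"
    unfolding I1_def I2_def using Henstock_Kurzweil_Integration.integral_combine[where a = "-pi" and c = 0 and b = pi and f = N] int by simp
  have lam_N1: "((\<lambda>x. lam x * N x) has_integral - I1) {-pi..0}"
  proof (rule has_integral_spike[of "{-pi, 0}"])
    show "((\<lambda>x. - N x) has_integral - I1) {-pi..0}"
      unfolding I1_def using int by (intro has_integral_neg integrable_integral)
  qed (auto simp: lam_eq_minus_one)
  have lam_N2: "((\<lambda>x. lam x * N x) has_integral I2) {0..pi}"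
  proof (rule has_integral_spike[of "{0, pi}"])
    show "(N has_integral I2) {0..pi}"
      unfolding I2_def using int by (intro integrable_integral)
  qed (auto simp: lam_eq_one)
  have "integral {-pi..pi} (\<lambda>x. lam x * N x) = I2 - I1"
    using has_integral_combine[OF _ _ lam_N1 lam_N2] by (simp add: integral_unique)
  then have "gammaN N = (I1 - I2) / (I1 + I2)"
    unfolding gammaN_def \<open>integral {-pi..pi} N = I1 + I2\<close> by (simp add: minus_divide_left)
  moreover have "-1 < (I1 - I2) / (I1 + I2)" "(I1 - I2) / (I1 + I2) < 1"
    using \<open>I1 > 0\<close> \<open>I2 > 0\<close> by (simp_all add: field_simps)
  ultimately show ?thesis
    by (simp only: abs_less_iff) simp
qed

section \<open>The right-hand side and its constant barriers\<close>

text \<open>Divided by \<open>\<kappa>\<close>, the equation of \<open>is_pos_solution\<close> reads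
  \<open>2 q d powr (-2q/n) \<psi>'' = ode_rhs q \<gamma> t x \<psi>\<close>; \<open>mean_rhs\<close> is the average of its two
  values at \<open>\<lambda> = 1\<close> and \<open>\<lambda> = -1\<close>.\<close>

definition ode_rhs :: "real \<Rightarrow> real \<Rightarrow> real \<Rightarrow> real \<Rightarrow> real \<Rightarrow> real" where
  "ode_rhs q \<gamma> t x s = (t + lam x)^2 * s powr (q - 1) - (\<gamma> + lam x)^2 * s powr (- q - 1)"

definition mean_rhs :: "real \<Rightarrow> real \<Rightarrow> real \<Rightarrow> real \<Rightarrow> real" where
  "mean_rhs q \<gamma> t c = (1 + t^2) * c powr (q - 1) - (1 + \<gamma>^2) * c powr (- q - 1)"

definition pm_sq_min :: "real \<Rightarrow> real" where
  "pm_sq_min u = min ((u + 1)^2) ((u - 1)^2)"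

definition pm_sq_max :: "real \<Rightarrow> real" where
  "pm_sq_max u = max ((u + 1)^2) ((u - 1)^2)"

lemma pm_sq_bounds:
  assumes "sin x \<noteq> 0"
  shows "pm_sq_min u \<le> (u + lam x)^2" "(u + lam x)^2 \<le> pm_sq_max u"
  using assms by (auto simp: lam_def sgn_if pm_sq_min_def pm_sq_max_def)

lemma pm_sq_min_pos: "\<bar>u\<bar> \<noteq> 1 \<Longrightarrow> pm_sq_min u > 0"
  by (auto simp: pm_sq_min_def)

lemma pm_sq_min_le_max: "pm_sq_min u \<le> pm_sq_max u"
  by (simp add: pm_sq_min_def pm_sq_max_def)

lemma ode_rhs_factor:
  assumes "s > 0"
  shows "ode_rhs q \<gamma> t x s = s powr (- q - 1) * ((t + lam x)^2 * s powr (2 * q) - (\<gamma> + lam x)^2)"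
proof -
  have "s powr (q - 1) = s powr (- q - 1) * s powr (2 * q)"
    by (simp add: powr_add[symmetric])
  then show ?thesis
    by (simp add: ode_rhs_def algebra_simps)
qed

lemma ode_rhs_plus_minus:
  assumes "lam x = 1" "lam y = -1"
  shows "ode_rhs q \<gamma> t x c + ode_rhs q \<gamma> t y c = 2 * mean_rhs q \<gamma> t c"
  using assms by (simp add: ode_rhs_def mean_rhs_def power2_eq_square algebra_simps)

lemma mean_rhs_factor:
  assumes "c > 0"
  shows "c powr (q + 1) * mean_rhs q \<gamma> t c = (1 + t^2) * c powr (2 * q) - (1 + \<gamma>^2)"
proof -
  have "c powr (q + 1) * c powr (q - 1) = c powr (2 * q)" "c powr (q + 1) * c powr (- q - 1) = 1"
    using assms by (simp_all add: powr_add[symmetric])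
  then show ?thesis
    by (simp add: mean_rhs_def algebra_simps)
qed

lemma powr_lipschitz_on:
  fixes m M r :: real
  assumes "0 < m"
  shows "(\<bar>r\<bar> * (m powr (r - 1) + M powr (r - 1)))-lipschitz_on {m..M} (\<lambda>s. s powr r)"
proof (rule lipschitz_onI)
  define B where "B = \<bar>r\<bar> * (m powr (r - 1) + M powr (r - 1))"
  have deriv: "((\<lambda>s. s powr r) has_field_derivative r * z powr (r - 1)) (at z within {m..M})"
    if "z \<in> {m..M}" for z
    using \<open>0 < m\<close> that by (intro has_field_derivative_at_within[OF has_real_derivative_powr]) auto
  have bound: "norm (r * z powr (r - 1)) \<le> B" if z: "z \<in> {m..M}" for z
  proof -
    have "z powr (r - 1) \<le> m powr (r - 1) + M powr (r - 1)"
    proof (cases "r - 1 \<le> 0")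
      case True
      then have "z powr (r - 1) \<le> m powr (r - 1)"
        using powr_mono2'[of "r - 1" m z] z \<open>0 < m\<close> by simp
      then show ?thesis
        using powr_ge_zero[of M "r - 1"] by linarith
    next
      case False
      then have "z powr (r - 1) \<le> M powr (r - 1)"
        using powr_mono2[of "r - 1" z M] z \<open>0 < m\<close> by simp
      then show ?thesis
        using powr_ge_zero[of m "r - 1"] by linarith
    qed
    then show ?thesis
      using mult_left_mono[OF _ abs_ge_zero[of r]] by (simp add: B_def abs_mult)
  qed
  fix s u assume "s \<in> {m..M}" "u \<in> {m..M}"
  then have "norm (s powr r - u powr r) \<le> B * norm (s - u)"
    using field_differentiable_bound[OF convex_real_interval(5) deriv bound] by blast
  then show "dist (s powr r) (u powr r) \<le> \<bar>r\<bar> * (m powr (r - 1) + M powr (r - 1)) * dist s u"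
    by (simp add: B_def dist_real_def)
qed simp

locale ode_coeffs =
  fixes q \<gamma> t :: real
  assumes q: "q > 1" and t: "\<bar>t\<bar> \<noteq> 1" and \<gamma>: "\<bar>\<gamma>\<bar> \<noteq> 1"
begin

definition upper_barrier :: real where
  "upper_barrier = (pm_sq_max \<gamma> / pm_sq_min t) powr (1 / (2 * q))"

definition lower_barrier :: real where
  "lower_barrier = (pm_sq_min \<gamma> / pm_sq_max t) powr (1 / (2 * q))"

definition rhs_bound :: real where
  "rhs_bound = pm_sq_max t * upper_barrier powr (q - 1) + pm_sq_max \<gamma> * lower_barrier powr (- q - 1)"

definition rhs_lipschitz_constant :: "real \<Rightarrow> bool" where
  "rhs_lipschitz_constant C \<longleftrightarrow> C \<ge> 0 \<and> (\<forall>x s u. sin x \<noteq> 0 \<longrightarrow>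
     s \<in> {lower_barrier..upper_barrier} \<longrightarrow> u \<in> {lower_barrier..upper_barrier} \<longrightarrow>
     \<bar>ode_rhs q \<gamma> t x s - ode_rhs q \<gamma> t x u\<bar> \<le> C * \<bar>s - u\<bar>)"

definition limit_level :: real where
  "limit_level = ((1 + \<gamma>^2) / (1 + t^2)) powr (1 / (2 * q))"

lemma pm_sq_pos: "pm_sq_min t > 0" "pm_sq_max t > 0" "pm_sq_min \<gamma> > 0" "pm_sq_max \<gamma> > 0"
  using pm_sq_min_pos[OF t] pm_sq_min_pos[OF \<gamma>] pm_sq_min_le_max[of t] pm_sq_min_le_max[of \<gamma>]
  by auto

lemma barriers_pos: "upper_barrier > 0" "lower_barrier > 0"
  using pm_sq_pos by (simp_all add: upper_barrier_def lower_barrier_def)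

lemma rhs_bound_nonneg: "rhs_bound \<ge> 0"
  using pm_sq_pos by (simp add: rhs_bound_def)

lemma upper_barrier_powr: "upper_barrier powr (2 * q) = pm_sq_max \<gamma> / pm_sq_min t"
  using q pm_sq_pos by (simp add: upper_barrier_def powr_powr)

lemma lower_barrier_powr: "lower_barrier powr (2 * q) = pm_sq_min \<gamma> / pm_sq_max t"
  using q pm_sq_pos by (simp add: lower_barrier_def powr_powr)

lemma ode_rhs_pos_above:
  assumes "upper_barrier < l" "l \<le> P"
  obtains \<eta> where "\<eta> > 0" "\<And>x s. sin (x :: real) \<noteq> 0 \<Longrightarrow> l \<le> s \<Longrightarrow> s \<le> P \<Longrightarrow> \<eta> \<le> ode_rhs q \<gamma> t x s"
proof
  have "l > 0"
    using assms barriers_pos by simp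
  have "pm_sq_max \<gamma> / pm_sq_min t < l powr (2 * q)"
    using powr_less_mono2[of "2 * q" upper_barrier l] q assms barriers_pos upper_barrier_powr by simp
  then have gap: "0 < pm_sq_min t * l powr (2 * q) - pm_sq_max \<gamma>"
    using pm_sq_pos by (simp add: field_simps)
  then show "0 < P powr (- q - 1) * (pm_sq_min t * l powr (2 * q) - pm_sq_max \<gamma>)"
    using assms \<open>l > 0\<close> by simp
  fix x s :: real assume x: "sin x \<noteq> 0" and s: "l \<le> s" "s \<le> P"
  then have "s > 0"
    using \<open>l > 0\<close> by simp
  have "pm_sq_min t * l powr (2 * q) \<le> (t + lam x)^2 * s powr (2 * q)"
    using pm_sq_bounds[OF x, of t] powr_mono2[of "2 * q" l s] q s \<open>l > 0\<close> pm_sq_pos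
    by (intro mult_mono) auto
  then have "pm_sq_min t * l powr (2 * q) - pm_sq_max \<gamma> \<le> (t + lam x)^2 * s powr (2 * q) - (\<gamma> + lam x)^2"
    using pm_sq_bounds[OF x, of \<gamma>] by linarith
  moreover have "P powr (- q - 1) \<le> s powr (- q - 1)"
    using powr_mono2'[of "- q - 1" s P] q s \<open>l > 0\<close> by simp
  ultimately show "P powr (- q - 1) * (pm_sq_min t * l powr (2 * q) - pm_sq_max \<gamma>) \<le> ode_rhs q \<gamma> t x s"
    unfolding ode_rhs_factor[OF \<open>s > 0\<close>] using gap by (intro mult_mono) auto
qed

lemma ode_rhs_neg_below:
  assumes "0 < l" "l < lower_barrier"
  obtains \<eta> where "\<eta> > 0" "\<And>x s. sin (x :: real) \<noteq> 0 \<Longrightarrow> 0 < s \<Longrightarrow> s \<le> l \<Longrightarrow> ode_rhs q \<gamma> t x s \<le> - \<eta>"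
proof
  have "l powr (2 * q) < pm_sq_min \<gamma> / pm_sq_max t"
    using powr_less_mono2[of "2 * q" l lower_barrier] q assms lower_barrier_powr by simp
  then have gap: "0 < pm_sq_min \<gamma> - pm_sq_max t * l powr (2 * q)"
    using pm_sq_pos by (simp add: field_simps)
  then show "0 < l powr (- q - 1) * (pm_sq_min \<gamma> - pm_sq_max t * l powr (2 * q))"
    using assms by simp
  fix x s :: real assume x: "sin x \<noteq> 0" and s: "0 < s" "s \<le> l"
  have "(t + lam x)^2 * s powr (2 * q) \<le> pm_sq_max t * l powr (2 * q)"
    using pm_sq_bounds[OF x, of t] powr_mono2[of "2 * q" s l] q s pm_sq_pos
    by (intro mult_mono) auto
  then have "(t + lam x)^2 * s powr (2 * q) - (\<gamma> + lam x)^2 \<le> - (pm_sq_min \<gamma> - pm_sq_max t * l powr (2 * q))"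
    using pm_sq_bounds[OF x, of \<gamma>] by linarith
  then have "ode_rhs q \<gamma> t x s \<le> s powr (- q - 1) * - (pm_sq_min \<gamma> - pm_sq_max t * l powr (2 * q))"
    unfolding ode_rhs_factor[OF \<open>0 < s\<close>] by (rule mult_left_mono) auto
  also have "\<dots> \<le> l powr (- q - 1) * - (pm_sq_min \<gamma> - pm_sq_max t * l powr (2 * q))"
    using powr_mono2'[of "- q - 1" s l] q s gap by (intro mult_right_mono_neg) auto
  finally show "ode_rhs q \<gamma> t x s \<le> - (l powr (- q - 1) * (pm_sq_min \<gamma> - pm_sq_max t * l powr (2 * q)))"
    by (simp add: algebra_simps)
qed

lemma ode_rhs_bound:
  assumes "sin x \<noteq> 0" "lower_barrier \<le> s" "s \<le> upper_barrier"
  shows "\<bar>ode_rhs q \<gamma> t x s\<bar> \<le> rhs_bound"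
proof -
  have "(t + lam x)^2 * s powr (q - 1) \<le> pm_sq_max t * upper_barrier powr (q - 1)"
    using pm_sq_bounds[OF assms(1), of t] powr_mono2[of "q - 1" s] q assms barriers_pos pm_sq_pos
    by (intro mult_mono) auto
  moreover have "(\<gamma> + lam x)^2 * s powr (- q - 1) \<le> pm_sq_max \<gamma> * lower_barrier powr (- q - 1)"
    using pm_sq_bounds[OF assms(1), of \<gamma>] powr_mono2'[of "- q - 1" lower_barrier s] q assms barriers_pos pm_sq_pos
    by (intro mult_mono) auto
  moreover have "(t + lam x)^2 * s powr (q - 1) \<ge> 0" "(\<gamma> + lam x)^2 * s powr (- q - 1) \<ge> 0"
    by simp_all
  ultimately show ?thesis
    unfolding ode_rhs_def rhs_bound_def by linarith
qed

lemma ode_rhs_lipschitz: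
  obtains C where "rhs_lipschitz_constant C"
proof -
  define I where "I = {lower_barrier..upper_barrier}"
  obtain C1 C2 where C1: "C1-lipschitz_on I (\<lambda>s. s powr (q - 1))"
    and C2: "C2-lipschitz_on I (\<lambda>s. s powr (- q - 1))"
    unfolding I_def using powr_lipschitz_on barriers_pos by blast
  have "\<bar>ode_rhs q \<gamma> t x s - ode_rhs q \<gamma> t x u\<bar> \<le> (pm_sq_max t * C1 + pm_sq_max \<gamma> * C2) * \<bar>s - u\<bar>"
    if x: "sin x \<noteq> 0" and su: "s \<in> I" "u \<in> I" for x s u
  proof -
    have "ode_rhs q \<gamma> t x s - ode_rhs q \<gamma> t x u
        = (t + lam x)^2 * (s powr (q - 1) - u powr (q - 1)) - (\<gamma> + lam x)^2 * (s powr (- q - 1) - u powr (- q - 1))"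
      by (simp add: ode_rhs_def algebra_simps)
    also have "\<bar>\<dots>\<bar> \<le> (t + lam x)^2 * \<bar>s powr (q - 1) - u powr (q - 1)\<bar>
        + (\<gamma> + lam x)^2 * \<bar>s powr (- q - 1) - u powr (- q - 1)\<bar>"
      by (rule order.trans[OF abs_triangle_ineq4]) (simp add: abs_mult)
    also have "\<dots> \<le> pm_sq_max t * (C1 * \<bar>s - u\<bar>) + pm_sq_max \<gamma> * (C2 * \<bar>s - u\<bar>)"
      using lipschitz_onD[OF C1 su] lipschitz_onD[OF C2 su] pm_sq_bounds[OF x] pm_sq_pos
      by (intro add_mono mult_mono) (auto simp: dist_real_def)
    finally show ?thesis
      by (simp add: algebra_simps)
  qed
  moreover have "pm_sq_max t * C1 + pm_sq_max \<gamma> * C2 \<ge> 0"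
    using lipschitz_on_nonneg[OF C1] lipschitz_on_nonneg[OF C2] pm_sq_pos by simp
  ultimately show ?thesis
    using that unfolding rhs_lipschitz_constant_def I_def by blast
qed

end

section \<open>A priori bounds for a single solution\<close>

locale ode_solution = ode_coeffs +
  fixes A :: real and \<psi> :: "real \<Rightarrow> real"
  assumes A: "A > 0" and W2inf: "W2inf_circle \<psi>" and pos: "\<And>x. \<psi> x > 0"
    and ode: "AE x in lebesgue. (deriv \<psi> has_real_derivative ode_rhs q \<gamma> t x (\<psi> x) / A) (at x)"
begin

lemma periodic: "periodic_2pi \<psi>"
  and differentiable: "\<psi> differentiable (at x)"
  using W2inf by (auto simp: W2inf_circle_def)

lemma has_deriv: "(\<psi> has_real_derivative deriv \<psi> x) (at x)"
  using differentiable DERIV_deriv_iff_real_differentiable by blast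

lemma continuous: "continuous_on S \<psi>"
  using differentiable by (meson continuous_at_imp_continuous_on differentiable_imp_continuous_within)

lemma deriv_lipschitz:
  obtains L where "L-lipschitz_on UNIV (deriv \<psi>)"
proof -
  obtain L where L: "\<And>x y. \<bar>deriv \<psi> x - deriv \<psi> y\<bar> \<le> L * \<bar>x - y\<bar>"
    using W2inf by (auto simp: W2inf_circle_def)
  have "L \<ge> 0"
    using order.trans[OF abs_ge_zero L[of 1 0]] by simp
  then have "L-lipschitz_on UNIV (deriv \<psi>)"
    using L by (auto intro!: lipschitz_onI simp: dist_real_def)
  then show ?thesis
    by (rule that)
qed

lemma ode_AE: "AE x in lebesgue. sin x \<noteq> 0 \<and> (deriv \<psi> has_real_derivative ode_rhs q \<gamma> t x (\<psi> x) / A) (at x)"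
  using ode AE_sin_nonzero by eventually_elim simp

lemma le_upper_barrier: "\<psi> x \<le> upper_barrier"
proof (rule ccontr)
  assume "\<not> ?thesis"
  obtain x0 where max: "\<And>y. \<psi> y \<le> \<psi> x0"
    using periodic_2pi_attains_max[OF periodic continuous] by metis
  define l where "l = (upper_barrier + \<psi> x0) / 2"
  have l: "upper_barrier < l" "l < \<psi> x0"
    using max[of x] \<open>\<not> _\<close> by (auto simp: l_def)
  obtain \<eta> where "\<eta> > 0" and \<eta>: "\<And>x s. sin x \<noteq> 0 \<Longrightarrow> l \<le> s \<Longrightarrow> s \<le> \<psi> x0 \<Longrightarrow> \<eta> \<le> ode_rhs q \<gamma> t x s"
    using ode_rhs_pos_above[OF l(1) less_imp_le[OF l(2)]] by blast
  obtain \<delta> where "\<delta> > 0" and near: "\<And>y. \<bar>y - x0\<bar> < \<delta> \<Longrightarrow> l < \<psi> y"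
    using isCont_gt_nearby[OF differentiable_imp_continuous_within[OF differentiable] l(2)] by blast
  obtain L where "L-lipschitz_on UNIV (deriv \<psi>)"
    using deriv_lipschitz .
  show False
  proof (rule not_local_max_of_AE_second_deriv_pos[OF has_deriv _ \<open>\<delta> > 0\<close>])
    show "L-lipschitz_on {x0..x0 + \<delta>} (deriv \<psi>)"
      using \<open>L-lipschitz_on UNIV _\<close> by (rule lipschitz_on_subset) simp
    show "AE z in lebesgue. z \<in> {x0<..<x0 + \<delta>} \<longrightarrow>
        (\<exists>D. (deriv \<psi> has_real_derivative D) (at z) \<and> \<eta> / A \<le> D)"
      using ode_AE
    proof eventually_elim
      case (elim z)
      have "\<eta> / A \<le> ode_rhs q \<gamma> t z (\<psi> z) / A" if "z \<in> {x0<..<x0 + \<delta>}"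
        using \<eta>[of z "\<psi> z"] near[of z] max[of z] elim that A by (intro divide_right_mono) auto
      then show ?case
        using elim by blast
    qed
  qed (use \<open>\<eta> > 0\<close> A max in auto)
qed

lemma lower_barrier_le: "lower_barrier \<le> \<psi> x"
proof (rule ccontr)
  assume "\<not> ?thesis"
  obtain x0 where min: "\<And>y. \<psi> x0 \<le> \<psi> y"
    using periodic_2pi_attains_min[OF periodic continuous] by metis
  define l where "l = (lower_barrier + \<psi> x0) / 2"
  have l: "0 < l" "l < lower_barrier" "\<psi> x0 < l"
    using min[of x] \<open>\<not> _\<close> pos[of x0] by (auto simp: l_def)
  obtain \<eta> where "\<eta> > 0" and \<eta>: "\<And>x s. sin x \<noteq> 0 \<Longrightarrow> 0 < s \<Longrightarrow> s \<le> l \<Longrightarrow> ode_rhs q \<gamma> t x s \<le> - \<eta>"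
    using ode_rhs_neg_below[OF l(1,2)] by blast
  have "isCont (\<lambda>x. - \<psi> x) x0" "- l < - \<psi> x0"
    using continuous_minus[OF differentiable_imp_continuous_within[OF differentiable]] l(3) by auto
  then obtain \<delta> where "\<delta> > 0" and near: "\<And>y. \<bar>y - x0\<bar> < \<delta> \<Longrightarrow> - l < - \<psi> y"
    using isCont_gt_nearby by blast
  obtain L where "L-lipschitz_on UNIV (deriv \<psi>)"
    using deriv_lipschitz .
  show False
  proof (rule not_local_min_of_AE_second_deriv_neg[OF has_deriv _ \<open>\<delta> > 0\<close>])
    show "L-lipschitz_on {x0..x0 + \<delta>} (deriv \<psi>)"
      using \<open>L-lipschitz_on UNIV _\<close> by (rule lipschitz_on_subset) simp
    show "AE z in lebesgue. z \<in> {x0<..<x0 + \<delta>} \<longrightarrow>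
        (\<exists>D. (deriv \<psi> has_real_derivative D) (at z) \<and> D \<le> - (\<eta> / A))"
      using ode_AE
    proof eventually_elim
      case (elim z)
      have "ode_rhs q \<gamma> t z (\<psi> z) / A \<le> - \<eta> / A" if "z \<in> {x0<..<x0 + \<delta>}"
        using \<eta>[of z "\<psi> z"] near[of z] pos[of z] elim that A by (intro divide_right_mono) auto
      then show ?case
        using elim by auto
    qed
  qed (use \<open>\<eta> > 0\<close> A min in auto)
qed

lemma ode_rhs_div_bound:
  assumes "sin x \<noteq> 0"
  shows "\<bar>ode_rhs q \<gamma> t x (\<psi> x) / A\<bar> \<le> rhs_bound / A"
  using divide_right_mono[OF ode_rhs_bound[OF assms lower_barrier_le le_upper_barrier], of A] A
  by simp

lemma second_deriv_bound: "AE x in lebesgue. \<bar>deriv (deriv \<psi>) x\<bar> \<le> rhs_bound / A"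
  using ode_AE
proof eventually_elim
  case (elim x)
  then have "deriv (deriv \<psi>) x = ode_rhs q \<gamma> t x (\<psi> x) / A"
    using DERIV_imp_deriv by blast
  then show ?case
    using ode_rhs_div_bound elim by simp
qed

lemma deriv_increment_bound: "\<bar>deriv \<psi> y - deriv \<psi> x\<bar> \<le> rhs_bound / A * \<bar>y - x\<bar>"
proof -
  obtain L where L: "L-lipschitz_on UNIV (deriv \<psi>)"
    using deriv_lipschitz .
  have *: "\<bar>deriv \<psi> y - deriv \<psi> x\<bar> \<le> rhs_bound / A * (y - x)" if "x \<le> y" for x y
  proof -
    have "\<bar>deriv \<psi> y - deriv \<psi> x - 0 * (y - x)\<bar> \<le> rhs_bound / A * (y - x)"
    proof (rule lipschitz_increment_near_of_AE_deriv_near[OF that lipschitz_on_subset[OF L]])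
      show "AE z in lebesgue. z \<in> {x<..<y} \<longrightarrow>
          (\<exists>D. (deriv \<psi> has_real_derivative D) (at z) \<and> \<bar>D - 0\<bar> \<le> rhs_bound / A)"
        using ode_AE by eventually_elim (use ode_rhs_div_bound in auto)
    qed simp
    then show ?thesis
      by simp
  qed
  show ?thesis
    using *[of x y] *[of y x] by (cases "x \<le> y") (auto simp: abs_minus_commute)
qed

lemma deriv_bound: "\<bar>deriv \<psi> y\<bar> \<le> pi * (rhs_bound / A)"
proof -
  obtain x0 where "\<And>y. \<psi> y \<le> \<psi> x0"
    using periodic_2pi_attains_max[OF periodic continuous] by metis
  then have "deriv \<psi> x0 = 0"
    using DERIV_local_max[OF has_deriv zero_less_one] by blast
  obtain y' where y': "\<bar>y' - x0\<bar> \<le> pi" "deriv \<psi> y' = deriv \<psi> y"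
    using periodic_2pi_reduce[OF periodic_2pi_deriv[OF periodic differentiable]] by blast
  have "\<bar>deriv \<psi> y\<bar> = \<bar>deriv \<psi> y' - deriv \<psi> x0\<bar>"
    using y'(2) \<open>deriv \<psi> x0 = 0\<close> by simp
  also have "\<dots> \<le> rhs_bound / A * \<bar>y' - x0\<bar>"
    by (rule deriv_increment_bound)
  also have "\<dots> \<le> rhs_bound / A * pi"
    using y'(1) rhs_bound_nonneg A by (intro mult_left_mono) auto
  finally show ?thesis
    by (simp add: mult.commute)
qed

lemma oscillation_bound: "\<bar>\<psi> y - \<psi> 0\<bar> \<le> pi^2 * (rhs_bound / A)"
proof -
  obtain y' where y': "\<bar>y' - 0\<bar> \<le> pi" "\<psi> y' = \<psi> y"
    using periodic_2pi_reduce[OF periodic] by blast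
  have "norm (\<psi> y' - \<psi> 0) \<le> pi * (rhs_bound / A) * norm (y' - 0)"
    by (rule field_differentiable_bound[OF convex_UNIV has_deriv]) (use deriv_bound in simp_all)
  also have "\<dots> \<le> pi * (rhs_bound / A) * pi"
    using y'(1) rhs_bound_nonneg A by (intro mult_left_mono) auto
  finally show ?thesis
    using y'(2) by (simp add: power2_eq_square algebra_simps)
qed

lemma deriv_increment_where_lam_const:
  assumes C: "rhs_lipschitz_constant C" and lam: "\<And>x. x \<in> {a<..<a + pi} \<Longrightarrow> lam x = lam x0"
  shows "\<bar>deriv \<psi> (a + pi) - deriv \<psi> a - ode_rhs q \<gamma> t x0 (\<psi> 0) / A * pi\<bar>
           \<le> C * pi^2 * (rhs_bound / A) / A * pi"
proof -
  define \<epsilon> where "\<epsilon> = C * pi^2 * (rhs_bound / A)"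
  obtain L where L: "L-lipschitz_on UNIV (deriv \<psi>)"
    using deriv_lipschitz .
  have "\<bar>deriv \<psi> (a + pi) - deriv \<psi> a - ode_rhs q \<gamma> t x0 (\<psi> 0) / A * (a + pi - a)\<bar>
      \<le> \<epsilon> / A * (a + pi - a)"
  proof (rule lipschitz_increment_near_of_AE_deriv_near[OF _ lipschitz_on_subset[OF L]])
    show "AE z in lebesgue. z \<in> {a<..<a + pi} \<longrightarrow> (\<exists>D. (deriv \<psi> has_real_derivative D) (at z) \<and>
        \<bar>D - ode_rhs q \<gamma> t x0 (\<psi> 0) / A\<bar> \<le> \<epsilon> / A)"
      using ode_AE
    proof eventually_elim
      case (elim z)
      have "\<bar>ode_rhs q \<gamma> t z (\<psi> z) / A - ode_rhs q \<gamma> t x0 (\<psi> 0) / A\<bar> \<le> \<epsilon> / A"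
        if "z \<in> {a<..<a + pi}"
      proof -
        have "ode_rhs q \<gamma> t x0 (\<psi> 0) = ode_rhs q \<gamma> t z (\<psi> 0)"
          using lam[OF that] by (simp add: ode_rhs_def)
        moreover have "\<bar>ode_rhs q \<gamma> t z (\<psi> z) - ode_rhs q \<gamma> t z (\<psi> 0)\<bar> \<le> C * \<bar>\<psi> z - \<psi> 0\<bar>"
          using C elim lower_barrier_le le_upper_barrier by (auto simp: rhs_lipschitz_constant_def)
        moreover have "C * \<bar>\<psi> z - \<psi> 0\<bar> \<le> \<epsilon>"
          using mult_left_mono[OF oscillation_bound, of C] C
          by (simp add: \<epsilon>_def rhs_lipschitz_constant_def mult.assoc)
        ultimately show ?thesis
          using A by (simp add: diff_divide_distrib[symmetric] divide_right_mono)
      qed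
      then show ?case
        using elim by auto
    qed
  qed simp_all
  then show ?thesis
    by (simp add: \<epsilon>_def)
qed

lemma mean_rhs_bound:
  assumes C: "rhs_lipschitz_constant C"
  shows "\<bar>mean_rhs q \<gamma> t (\<psi> 0)\<bar> \<le> C * pi^2 * (rhs_bound / A)"
proof -
  define \<epsilon> where "\<epsilon> = C * pi^2 * (rhs_bound / A)"
  have lam: "lam (pi / 2) = 1" "lam (- pi / 2) = -1"
    by (simp_all add: lam_eq_one lam_eq_minus_one)
  define Fp where "Fp = ode_rhs q \<gamma> t (pi / 2) (\<psi> 0) / A * pi"
  define Fm where "Fm = ode_rhs q \<gamma> t (- pi / 2) (\<psi> 0) / A * pi"
  have plus: "\<bar>deriv \<psi> pi - deriv \<psi> 0 - Fp\<bar> \<le> \<epsilon> / A * pi"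
    and minus: "\<bar>deriv \<psi> 0 - deriv \<psi> (- pi) - Fm\<bar> \<le> \<epsilon> / A * pi"
    unfolding Fp_def Fm_def \<epsilon>_def
    using deriv_increment_where_lam_const[OF C, of 0 "pi / 2"]
      deriv_increment_where_lam_const[OF C, of "- pi" "- pi / 2"] lam lam_eq_one lam_eq_minus_one
    by simp_all
  have "deriv \<psi> pi = deriv \<psi> (- pi)"
    using periodic_2pi_deriv[OF periodic differentiable, unfolded periodic_2pi_def, rule_format, of "- pi"]
    by simp
  then have "Fp + Fm = - ((deriv \<psi> pi - deriv \<psi> 0 - Fp) + (deriv \<psi> 0 - deriv \<psi> (- pi) - Fm))"
    by simp
  then have "\<bar>Fp + Fm\<bar> \<le> \<bar>deriv \<psi> pi - deriv \<psi> 0 - Fp\<bar> + \<bar>deriv \<psi> 0 - deriv \<psi> (- pi) - Fm\<bar>"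
    by (simp only: abs_minus_cancel abs_triangle_ineq)
  also have "\<dots> \<le> 2 * (\<epsilon> / A * pi)"
    using add_mono[OF plus minus] by (simp only: mult_2)
  also have "Fp + Fm = (ode_rhs q \<gamma> t (pi / 2) (\<psi> 0) + ode_rhs q \<gamma> t (- pi / 2) (\<psi> 0)) * (pi / A)"
    unfolding Fp_def Fm_def by (simp add: ring_distribs add_divide_distrib)
  also have "\<dots> = mean_rhs q \<gamma> t (\<psi> 0) * (2 * pi / A)"
    using ode_rhs_plus_minus[OF lam] by simp
  also have "2 * (\<epsilon> / A * pi) = \<epsilon> * (2 * pi / A)"
    by simp
  finally have "\<bar>mean_rhs q \<gamma> t (\<psi> 0)\<bar> * (2 * pi / A) \<le> \<epsilon> * (2 * pi / A)"
    using A by (simp add: abs_mult)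
  then show ?thesis
    unfolding \<epsilon>_def by (rule mult_right_le_imp_le) (use A in simp)
qed

end

section \<open>Limits as \<open>A \<rightarrow> \<infinity>\<close>\<close>

lemma filterlim_powr_neg_at_top_at_right:
  fixes a e :: real
  assumes "a > 0" "e > 0"
  shows "filterlim (\<lambda>d. a * d powr (- e)) at_top (at_right 0)"
proof -
  have "((\<lambda>d. d powr e) \<longlongrightarrow> 0) (at_right 0)"
    using eventually_at_right_less[of 0] \<open>e > 0\<close>
    by (intro tendsto_zero_powrI[OF tendsto_ident_at tendsto_const]) (auto elim: eventually_mono)
  then have "filterlim (\<lambda>d. inverse (d powr e)) at_top (at_right 0)"
    using eventually_at_right_less[of 0] by (intro filterlim_inverse_at_top) (auto elim: eventually_mono)
  then have "filterlim (\<lambda>d. a * inverse (d powr e)) at_top (at_right 0)"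
    using \<open>a > 0\<close> by (intro filterlim_tendsto_pos_mult_at_top[OF tendsto_const])
  then show ?thesis
    by (simp add: powr_minus)
qed

lemma tendsto_mean_rhs_root:
  fixes c :: "'a \<Rightarrow> real"
  assumes "q > 0" and mean: "((\<lambda>x. mean_rhs q \<gamma> t (c x)) \<longlongrightarrow> 0) F"
    and bounds: "\<forall>\<^sub>F x in F. m \<le> c x \<and> c x \<le> M" and "0 < m"
  shows "(c \<longlongrightarrow> ((1 + \<gamma>^2) / (1 + t^2)) powr (1 / (2 * q))) F"
proof -
  define R where "R = (1 + \<gamma>^2) / (1 + t^2)"
  have "1 + t^2 > 0"
    by (simp add: add_pos_nonneg)
  then have "R > 0"
    by (simp add: R_def add_pos_nonneg)
  have "((\<lambda>x. c x powr (2 * q) - R) \<longlongrightarrow> 0) F"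
  proof (rule tendsto_0_le[OF mean])
    show "\<forall>\<^sub>F x in F. norm (c x powr (2 * q) - R) \<le> norm (mean_rhs q \<gamma> t (c x)) * (M powr (q + 1) / (1 + t^2))"
      using bounds
    proof eventually_elim
      case (elim x)
      then have "c x > 0"
        using \<open>0 < m\<close> by linarith
      have "(1 + t^2) * R = 1 + \<gamma>^2"
        using \<open>1 + t^2 > 0\<close> by (simp add: R_def)
      then have "(1 + t^2) * (c x powr (2 * q) - R) = c x powr (q + 1) * mean_rhs q \<gamma> t (c x)"
        using mean_rhs_factor[OF \<open>c x > 0\<close>, of q \<gamma> t] by (simp add: algebra_simps)
      then have "c x powr (2 * q) - R = c x powr (q + 1) * mean_rhs q \<gamma> t (c x) / (1 + t^2)"
        using \<open>1 + t^2 > 0\<close> by (simp add: field_simps)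
      also have "\<bar>\<dots>\<bar> \<le> M powr (q + 1) * \<bar>mean_rhs q \<gamma> t (c x)\<bar> / (1 + t^2)"
        using elim \<open>c x > 0\<close> \<open>q > 0\<close>
        by (simp add: abs_mult divide_right_mono mult_right_mono powr_mono2 add_pos_nonneg)
      finally show ?case
        by (simp add: mult.commute)
    qed
  qed
  then have "((\<lambda>x. c x powr (2 * q)) \<longlongrightarrow> R) F"
    by (rule LIM_zero_cancel)
  then have "((\<lambda>x. (c x powr (2 * q)) powr (1 / (2 * q))) \<longlongrightarrow> R powr (1 / (2 * q))) F"
    using \<open>R > 0\<close> by (intro tendsto_powr tendsto_const) auto
  moreover have "\<forall>\<^sub>F x in F. (c x powr (2 * q)) powr (1 / (2 * q)) = c x"
    using bounds by eventually_elim (use \<open>0 < m\<close> \<open>q > 0\<close> in \<open>simp add: powr_powr\<close>)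
  ultimately show ?thesis
    unfolding R_def by (rule Lim_transform_eventually)
qed

lemma uniform_limit_const_of_oscillation:
  fixes f :: "'a \<Rightarrow> 'b \<Rightarrow> real"
  assumes center: "((\<lambda>d. f d a) \<longlongrightarrow> c) F" and "(r \<longlongrightarrow> 0) F"
    and osc: "\<forall>\<^sub>F d in F. \<forall>x. \<bar>f d x - f d a\<bar> \<le> r d"
  shows "uniform_limit UNIV f (\<lambda>_. c) F"
proof (rule uniform_limitI)
  fix e :: real assume "e > 0"
  have "\<forall>\<^sub>F d in F. dist (f d a) c < e / 2"
    using tendstoD[OF center, of "e / 2"] \<open>e > 0\<close> by simp
  moreover have "\<forall>\<^sub>F d in F. r d < e / 2"
    using order_tendstoD(2)[OF \<open>(r \<longlongrightarrow> 0) F\<close>, of "e / 2"] \<open>e > 0\<close> by simp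
  ultimately show "\<forall>\<^sub>F d in F. \<forall>x\<in>UNIV. dist (f d x) c < e"
    using osc
  proof eventually_elim
    case (elim d)
    show ?case
    proof
      fix x
      have "dist (f d x) c \<le> \<bar>f d x - f d a\<bar> + dist (f d a) c"
        by (simp add: dist_real_def)
      then show "dist (f d x) c < e"
        using elim spec[OF elim(3), of x] by linarith
    qed
  qed
qed

lemma W2p_dist_pow_le:
  assumes "p \<ge> 0" and "\<And>x. \<bar>f x - c\<bar> \<le> a" and "\<And>x. \<bar>deriv f x\<bar> \<le> b"
    and "AE x in lebesgue. \<bar>deriv (deriv f) x\<bar> \<le> e"
  shows "W2p_dist_pow p f c \<le> ennreal (2 * pi * (a powr p + b powr p + e powr p))"
proof -
  define B where "B = a powr p + b powr p + e powr p"
  have "W2p_dist_pow p f c \<le> (\<integral>\<^sup>+ x. ennreal B * indicator {-pi..pi} x \<partial>lebesgue)"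
    unfolding W2p_dist_pow_def
  proof (rule nn_integral_mono_AE)
    show "AE x in lebesgue. ennreal (\<bar>f x - c\<bar> powr p + \<bar>deriv f x\<bar> powr p + \<bar>deriv (deriv f) x\<bar> powr p)
        * indicator {-pi..pi} x \<le> ennreal B * indicator {-pi..pi} x"
      using assms(4)
    proof eventually_elim
      case (elim x)
      have "\<bar>f x - c\<bar> powr p + \<bar>deriv f x\<bar> powr p + \<bar>deriv (deriv f) x\<bar> powr p \<le> B"
        unfolding B_def using assms(1-3) elim by (intro add_mono powr_mono2) auto
      then show ?case
        by (auto simp: indicator_def simp del: ennreal_plus intro: ennreal_leI)
    qed
  qed
  also have "\<dots> = ennreal B * emeasure lebesgue {-pi..pi}"
    by (rule nn_integral_cmult_indicator) simp
  also have "\<dots> = ennreal (2 * pi * B)"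
    by (simp add: ennreal_mult'' mult.commute)
  finally show ?thesis
    unfolding B_def .
qed

lemma W2p_dist_pow_tendsto_zero:
  assumes "p > 0" and "(a \<longlongrightarrow> 0) F" "(b \<longlongrightarrow> 0) F" "(e \<longlongrightarrow> 0) F"
    and bounds: "\<forall>\<^sub>F d in F. (\<forall>x. \<bar>f d x - c\<bar> \<le> a d) \<and> (\<forall>x. \<bar>deriv (f d) x\<bar> \<le> b d) \<and>
                   (AE x in lebesgue. \<bar>deriv (deriv (f d)) x\<bar> \<le> e d)"
  shows "((\<lambda>d. W2p_dist_pow p (f d) c) \<longlongrightarrow> 0) F"
proof -
  define B where "B d = 2 * pi * (\<bar>a d\<bar> powr p + \<bar>b d\<bar> powr p + \<bar>e d\<bar> powr p)" for d
  have powr_zero: "((\<lambda>d. \<bar>g d\<bar> powr p) \<longlongrightarrow> 0) F" if "(g \<longlongrightarrow> 0) F" for g :: "'a \<Rightarrow> real"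
    using \<open>p > 0\<close> by (intro tendsto_zero_powrI[OF tendsto_rabs_zero[OF that] tendsto_const]) auto
  have "(B \<longlongrightarrow> 0) F"
    unfolding B_def using tendsto_add_zero[OF tendsto_add_zero] powr_zero assms(2-4)
    by (intro tendsto_mult_right_zero) blast
  then have "((\<lambda>d. ennreal (B d)) \<longlongrightarrow> 0) F"
    using tendsto_ennrealI[of B 0] by simp
  moreover have "\<forall>\<^sub>F d in F. W2p_dist_pow p (f d) c \<le> ennreal (B d)"
    using bounds
  proof eventually_elim
    case (elim d)
    then show ?case
      unfolding B_def using \<open>p > 0\<close>
      by (intro W2p_dist_pow_le) (auto elim: eventually_mono intro: order.trans[OF _ abs_ge_self])
  qed
  ultimately show ?thesis
    using tendsto_sandwich[of "\<lambda>_. 0" "\<lambda>d. W2p_dist_pow p (f d) c" F "\<lambda>d. ennreal (B d)" 0] by simp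
qed

locale ode_solution_family = ode_coeffs +
  fixes F :: "'a filter" and A :: "'a \<Rightarrow> real" and \<psi> :: "'a \<Rightarrow> real \<Rightarrow> real"
  assumes solutions: "\<forall>\<^sub>F d in F. ode_solution q \<gamma> t (A d) (\<psi> d)"
    and A_at_top: "filterlim A at_top F"
begin

lemma error_tendsto_zero: "((\<lambda>d. c * (rhs_bound / A d)) \<longlongrightarrow> 0) F"
proof -
  have "((\<lambda>d. c * rhs_bound * inverse (A d)) \<longlongrightarrow> 0) F"
    by (rule tendsto_mult_right_zero[OF tendsto_inverse_0_at_top[OF A_at_top]])
  then show ?thesis
    by (simp add: divide_inverse mult.assoc)
qed

lemma center_tendsto: "((\<lambda>d. \<psi> d 0) \<longlongrightarrow> limit_level) F"
proof -
  obtain C where C: "rhs_lipschitz_constant C"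
    using ode_rhs_lipschitz by blast
  show ?thesis
    unfolding limit_level_def
  proof (rule tendsto_mean_rhs_root)
    show "((\<lambda>d. mean_rhs q \<gamma> t (\<psi> d 0)) \<longlongrightarrow> 0) F"
    proof (rule tendsto_0_le[OF error_tendsto_zero[of "C * pi^2"]])
      show "\<forall>\<^sub>F d in F. norm (mean_rhs q \<gamma> t (\<psi> d 0)) \<le> norm (C * pi^2 * (rhs_bound / A d)) * 1"
        using solutions
      proof eventually_elim
        case (elim d)
        show ?case
          using order.trans[OF ode_solution.mean_rhs_bound[OF elim C] abs_ge_self] by simp
      qed
    qed
    show "\<forall>\<^sub>F d in F. lower_barrier \<le> \<psi> d 0 \<and> \<psi> d 0 \<le> upper_barrier"
      using solutions by eventually_elim (simp add: ode_solution.lower_barrier_le ode_solution.le_upper_barrier)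
  qed (use q barriers_pos in auto)
qed

lemma uniform_limit: "uniform_limit UNIV \<psi> (\<lambda>_. limit_level) F"
proof (rule uniform_limit_const_of_oscillation[where f = \<psi> and a = 0])
  show "\<forall>\<^sub>F d in F. \<forall>x. \<bar>\<psi> d x - \<psi> d 0\<bar> \<le> pi^2 * (rhs_bound / A d)"
    using solutions by (rule eventually_mono) (use ode_solution.oscillation_bound in blast)
qed (rule center_tendsto error_tendsto_zero)+

lemma W2p_tendsto:
  assumes "p > 0"
  shows "((\<lambda>d. W2p_dist_pow p (\<psi> d) limit_level) \<longlongrightarrow> 0) F"
proof (rule W2p_dist_pow_tendsto_zero[OF assms, where b = "\<lambda>d. pi * (rhs_bound / A d)"
      and e = "\<lambda>d. rhs_bound / A d"])
  show "((\<lambda>d. pi^2 * (rhs_bound / A d) + \<bar>\<psi> d 0 - limit_level\<bar>) \<longlongrightarrow> 0) F"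
    using tendsto_add_zero[OF error_tendsto_zero tendsto_rabs_zero[OF LIM_zero[OF center_tendsto]]] .
  show "((\<lambda>d. rhs_bound / A d) \<longlongrightarrow> 0) F"
    using error_tendsto_zero[of 1] by simp
  show "\<forall>\<^sub>F d in F. (\<forall>x. \<bar>\<psi> d x - limit_level\<bar> \<le> pi^2 * (rhs_bound / A d) + \<bar>\<psi> d 0 - limit_level\<bar>) \<and>
      (\<forall>x. \<bar>deriv (\<psi> d) x\<bar> \<le> pi * (rhs_bound / A d)) \<and>
      (AE x in lebesgue. \<bar>deriv (deriv (\<psi> d)) x\<bar> \<le> rhs_bound / A d)"
    using solutions
  proof eventually_elim
    case (elim d)
    have "\<bar>\<psi> d x - limit_level\<bar> \<le> pi^2 * (rhs_bound / A d) + \<bar>\<psi> d 0 - limit_level\<bar>" for x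
      using dist_triangle[of "\<psi> d x" limit_level "\<psi> d 0"] ode_solution.oscillation_bound[OF elim, of x]
      by (simp add: dist_real_def)
    then show ?case
      using ode_solution.deriv_bound[OF elim] ode_solution.second_deriv_bound[OF elim] by simp
  qed
qed (rule error_tendsto_zero)

end

lemma (in ode_coeffs) ode_solution_of_is_pos_solution:
  assumes sol: "is_pos_solution n q \<kappa> \<gamma> t d \<psi>" and "\<kappa> > 0" "d > 0"
  shows "ode_solution q \<gamma> t (2 * q * d powr (- 2 * q / n)) \<psi>"
proof -
  define A where "A = 2 * q * d powr (- 2 * q / n)"
  have "A > 0"
    using q \<open>d > 0\<close> by (simp add: A_def)
  have "AE x in lebesgue. (deriv \<psi> has_real_derivative ode_rhs q \<gamma> t x (\<psi> x) / A) (at x)"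
    using sol unfolding is_pos_solution_def
  proof (elim conjE eventually_mono)
    fix x assume "\<exists>D. (deriv \<psi> has_real_derivative D) (at x) \<and>
        - 2 * \<kappa> * q * d powr (- 2 * q / n) * D - \<kappa> * (\<gamma> + lam x)^2 * \<psi> x powr (- q - 1)
        + \<kappa> * (t + lam x)^2 * \<psi> x powr (q - 1) = 0"
    then obtain D where D: "(deriv \<psi> has_real_derivative D) (at x)"
      and eq: "- 2 * \<kappa> * q * d powr (- 2 * q / n) * D - \<kappa> * (\<gamma> + lam x)^2 * \<psi> x powr (- q - 1)
        + \<kappa> * (t + lam x)^2 * \<psi> x powr (q - 1) = 0"
      by blast
    have "\<kappa> * (A * D) = \<kappa> * ode_rhs q \<gamma> t x (\<psi> x)"
      using eq by (simp add: A_def ode_rhs_def algebra_simps)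
    then have "D = ode_rhs q \<gamma> t x (\<psi> x) / A"
      using \<open>\<kappa> > 0\<close> \<open>A > 0\<close> by (simp add: field_simps)
    with D show "(deriv \<psi> has_real_derivative ode_rhs q \<gamma> t x (\<psi> x) / A) (at x)"
      by simp
  qed
  with \<open>A > 0\<close> sol show ?thesis
    unfolding A_def ode_solution_def ode_solution_axioms_def is_pos_solution_def
    using ode_coeffs_axioms by blast
qed

theorem lemma3p22:
  fixes n :: nat and p t :: real and N :: "real \<Rightarrow> real"
    and \<psi> :: "real \<Rightarrow> real \<Rightarrow> real"
  assumes "n \<ge> 3" and "p > 1"
    and "smooth_on_circle N" and "\<forall>x. N x > 0"
    and "\<forall>d>0. is_pos_solution (real n) (2 * real n / (real n - 2)) ((real n - 1) / real n)
                   (gammaN N) t d (\<psi> d)"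
    and "\<bar>t\<bar> \<noteq> 1"
  shows "((\<lambda>d. W2p_dist_pow p (\<psi> d)
             (((1 + (gammaN N)^2) / (1 + t^2)) powr (1 / (2 * (2 * real n / (real n - 2))))))
           \<longlongrightarrow> 0) (at_right 0) \<and>
         uniform_limit UNIV \<psi>
           (\<lambda>x. ((1 + (gammaN N)^2) / (1 + t^2)) powr (1 / (2 * (2 * real n / (real n - 2)))))
           (at_right 0) \<and>
         ((\<lambda>d. \<psi> d 0) \<longlongrightarrow>
           ((1 + (gammaN N)^2) / (1 + t^2)) powr (1 / (2 * (2 * real n / (real n - 2)))))
           (at_right 0)"
proof -
  define q where "q = 2 * real n / (real n - 2)"
  define \<gamma> where "\<gamma> = gammaN N"
  define A where "A d = 2 * q * d powr (- 2 * q / real n)" for d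
  have "q > 1"
    using \<open>n \<ge> 3\<close> by (simp add: q_def field_simps)
  have coeffs: "ode_coeffs q \<gamma> t"
    using \<open>q > 1\<close> \<open>\<bar>t\<bar> \<noteq> 1\<close> abs_gammaN_less_one[OF assms(3)] assms(4)
    by unfold_locales (auto simp: \<gamma>_def)
  have "ode_solution q \<gamma> t (A d) (\<psi> d)" if "d > 0" for d
    unfolding A_def
  proof (rule ode_coeffs.ode_solution_of_is_pos_solution[OF coeffs])
    show "is_pos_solution (real n) q ((real n - 1) / real n) \<gamma> t d (\<psi> d)"
      using assms(5) that by (simp add: q_def \<gamma>_def)
  qed (use \<open>n \<ge> 3\<close> that in auto)
  moreover have "filterlim A at_top (at_right 0)"
    using filterlim_powr_neg_at_top_at_right[of "2 * q" "2 * q / real n"] \<open>q > 1\<close> \<open>n \<ge> 3\<close>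
    by (simp add: A_def[abs_def])
  ultimately interpret ode_solution_family q \<gamma> t "at_right 0" A \<psi>
    using coeffs eventually_at_right_less[of 0]
    by (intro ode_solution_family.intro ode_solution_family_axioms.intro) (auto elim: eventually_mono)
  have "limit_level = ((1 + (gammaN N)^2) / (1 + t^2)) powr (1 / (2 * (2 * real n / (real n - 2))))"
    unfolding limit_level_def by (simp only: \<gamma>_def q_def)
  then show ?thesis
    using W2p_tendsto[of p] uniform_limit center_tendsto \<open>p > 1\<close> by simp
qed

end
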